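(* Let $\mathcal C$ be a real polynomial curve. If there exist a point $P_0\in\mathbb R^2$ and an angle $\theta\in(0,2\pi)$ such that the rotation of center $P_0$ and angle $\theta$ maps $\mathcal C$ onto itself, then $\theta=\pi$. That is, the only form of rotation symmetry a real polynomial curve can have is central symmetry.
   Context: A real polynomial curve is the plane curve $\mathcal C=\{(x(t),y(t)) : t\in\mathbb R\}\subset\mathbb R^2$ given by a parametrization $\varphi(t)=(x(t),y(t))$ with $x(t),y(t)\in\mathbb R[t]$ not both constant. $\mathcal C$ has rotation symmetry if some rotation of center $P_0$ and angle $\theta\in(0,2\pi)$ maps $\mathcal C$ onto itself; when $\theta=\pi$ this is called central symmetry (symmetry with respect to the point $P_0$, the center of symmetry). *)

theory Defs
  imports "HOL-Analysis.Analysis" "HOL-Computational_Algebra.Polynomial"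
begin

definition poly_curve :: "real poly \<Rightarrow> real poly \<Rightarrow> (real \<times> real) set" where
  "poly_curve x y = range (\<lambda>t. (poly x t, poly y t))"

definition rotation :: "real \<times> real \<Rightarrow> real \<Rightarrow> real \<times> real \<Rightarrow> real \<times> real" where
  "rotation P0 \<theta> P =
     (fst P0 + cos \<theta> * (fst P - fst P0) - sin \<theta> * (snd P - snd P0),
      snd P0 + sin \<theta> * (fst P - fst P0) + cos \<theta> * (snd P - snd P0))"

end

theory Submission
  imports Defs
begin

(* Let d be the larger of the degrees of x and y and (a, b) the vector of
   degree-d coefficients.  In the frame spanned by (a, b) the curve has the
   coordinates p = a x + b y ("along") of degree d and q = a y - b x
   ("across") of degree < d.  Hence |q| <= e |p| + M on the whole curve for
   every e > 0: far from the origin the curve lies in a thin cone around the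
   line through (a, b).  A rotation by theta turns this cone into a cone
   around the rotated line; if sin theta ~= 0 the two cones meet only in a
   bounded set.  But a rotation symmetry maps curve points to curve points,
   and |p| is unbounded on the curve; so sin theta = 0, i.e. theta = pi. *)

lemma poly_dominated_by_higher_degree:
  fixes p q :: "real poly" and e :: real
  assumes deg: "degree q < degree p" and e: "e > 0"
  shows "\<exists>M. \<forall>t. \<bar>poly q t\<bar> \<le> e * \<bar>poly p t\<bar> + M"
proof -
  have "((\<lambda>t. \<bar>poly q t / poly p t\<bar>) \<longlongrightarrow> 0) at_infinity"
    using poly_divide_tendsto_0_at_infinity[OF deg] by (rule tendsto_rabs_zero)
  then have "eventually (\<lambda>t. \<bar>poly q t / poly p t\<bar> < e) at_infinity"
    using e by (rule order_tendstoD(2))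
  moreover have "eventually (\<lambda>t. poly p t \<noteq> 0) at_infinity"
    using deg by (intro poly_eventually_not_zero) auto
  ultimately have "eventually (\<lambda>t. \<bar>poly q t\<bar> \<le> e * \<bar>poly p t\<bar>) at_infinity"
    by eventually_elim (simp add: abs_divide field_simps)
  then obtain R where far: "\<And>t. R \<le> norm t \<Longrightarrow> \<bar>poly q t\<bar> \<le> e * \<bar>poly p t\<bar>"
    unfolding eventually_at_infinity by blast
  have "bounded (poly q ` cball 0 R)"
    by (intro compact_imp_bounded compact_continuous_image continuous_on_poly
        continuous_on_id compact_cball)
  then obtain M where "\<forall>z \<in> poly q ` cball 0 R. norm z \<le> M"
    unfolding bounded_iff by blast
  then have near: "\<And>t. t \<in> cball 0 R \<Longrightarrow> \<bar>poly q t\<bar> \<le> M"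
    by simp
  have "\<bar>poly q t\<bar> \<le> e * \<bar>poly p t\<bar> + max M 0" for t
    using far[of t] near[of t] e
    by (cases "R \<le> norm t") (auto intro: add_increasing simp: not_le)
  then show ?thesis by blast
qed

lemma poly_unbounded:
  fixes p :: "real poly" and B :: real
  assumes "degree p > 0"
  shows "\<exists>t. B < \<bar>poly p t\<bar>"
proof -
  have "filterlim (\<lambda>t. norm (poly p t)) at_top at_infinity"
    by (rule filterlim_at_infinity_imp_norm_at_top[OF filterlim_poly_at_infinity[OF assms]])
  then have "eventually (\<lambda>t. B < norm (poly p t)) at_infinity"
    by (simp add: filterlim_at_top_dense)
  then show ?thesis
    using eventually_happens' trivial_limit_at_infinity by fastforce
qed

lemma sin_nonzero_in_open_turn:
  fixes \<theta> :: real
  assumes "0 < \<theta>" "\<theta> < 2 * pi" "\<theta> \<noteq> pi"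
  shows "sin \<theta> \<noteq> 0"
proof
  assume "sin \<theta> = 0"
  then obtain i :: int where i: "\<theta> = of_int i * pi"
    by (auto simp: sin_zero_iff_int2)
  with assms(1,2) have "0 < i" "i < 2"
    by (auto simp: zero_less_mult_iff mult_less_cancel_right)
  with i assms(3) show False by simp
qed

definition along :: "real \<Rightarrow> real \<Rightarrow> real \<times> real \<Rightarrow> real" where
  "along a b P = a * fst P + b * snd P"

definition across :: "real \<Rightarrow> real \<Rightarrow> real \<times> real \<Rightarrow> real" where
  "across a b P = a * snd P - b * fst P"

text \<open>Take for \<open>(a, b)\<close> the top coefficients.\<close>
lemma leading_direction:
  fixes x y :: "real poly"
  assumes "degree x > 0 \<or> degree y > 0"
  obtains a b :: real
  where "degree (smult a x + smult b y) > 0"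
    and "degree (smult a y - smult b x) < degree (smult a x + smult b y)"
proof -
  define d where "d = max (degree x) (degree y)"
  define a where "a = coeff x d"
  define b where "b = coeff y d"
  have dx: "degree x \<le> d" and dy: "degree y \<le> d" and d: "d > 0"
    using assms by (auto simp: d_def)
  have "a \<noteq> 0 \<or> b \<noteq> 0"
    using assms unfolding a_def b_def d_def
    by (cases "degree x \<le> degree y") (auto simp: max_def)
  then have "coeff (smult a x + smult b y) d \<noteq> 0"
    by (simp add: a_def b_def sum_power2_eq_zero_iff flip: power2_eq_square)
  moreover have "degree (smult a x + smult b y) \<le> d"
    using dx dy by (intro degree_add_le) (auto intro: order.trans[OF degree_smult_le])
  ultimately have along_deg: "degree (smult a x + smult b y) = d"
    by (metis le_antisym le_degree)
  have "coeff (smult a y - smult b x) d = 0"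
    by (simp add: a_def b_def)
  moreover have "degree (smult a y - smult b x) \<le> d"
    using dx dy by (intro degree_diff_le) (auto intro: order.trans[OF degree_smult_le])
  ultimately have "degree (smult a y - smult b x) < d"
    using d by (metis le_neq_implies_less leading_coeff_0_iff degree_0)
  with along_deg d show ?thesis by (intro that) auto
qed

lemma rotation_frame_coordinates:
  "\<exists>c1 c2. \<forall>P.
     along a b (rotation P0 \<theta> P) = cos \<theta> * along a b P - sin \<theta> * across a b P + c1 \<and>
     across a b (rotation P0 \<theta> P) = sin \<theta> * along a b P + cos \<theta> * across a b P + c2"
  by (rule exI[of _ "along a b P0 - cos \<theta> * along a b P0 + sin \<theta> * across a b P0"],
      rule exI[of _ "across a b P0 - sin \<theta> * along a b P0 - cos \<theta> * across a b P0"])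
     (simp add: rotation_def along_def across_def algebra_simps)

lemma cone_meets_rotated_cone_bounded:
  fixes c s u v M :: real
  assumes c: "\<bar>c\<bar> \<le> 1" and s: "\<bar>s\<bar> \<le> 1" "s \<noteq> 0"
  defines "e \<equiv> \<bar>s\<bar> / 4"
  shows "\<exists>B. \<forall>P Q. \<bar>Q\<bar> \<le> e * \<bar>P\<bar> + M \<longrightarrow>
                 \<bar>s * P + c * Q + v\<bar> \<le> e * \<bar>c * P - s * Q + u\<bar> + M \<longrightarrow>
                 \<bar>P\<bar> \<le> B"
proof (intro exI allI impI)
  fix P Q
  assume cone: "\<bar>Q\<bar> \<le> e * \<bar>P\<bar> + M"
    and rotated: "\<bar>s * P + c * Q + v\<bar> \<le> e * \<bar>c * P - s * Q + u\<bar> + M"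
  have e: "0 < e" "e \<le> 1" using s by (auto simp: e_def)
  have cQ: "\<bar>c * Q\<bar> \<le> \<bar>Q\<bar>" and cP: "\<bar>c * P\<bar> \<le> \<bar>P\<bar>" and sQ: "\<bar>s * Q\<bar> \<le> \<bar>Q\<bar>"
    using c s by (simp_all add: abs_mult mult_left_le_one_le)
  have sP: "\<bar>s * P\<bar> = 4 * (e * \<bar>P\<bar>)"
    by (simp add: e_def abs_mult)
  have "e * \<bar>P\<bar> \<le> \<bar>P\<bar>"
    using e by (simp add: mult_left_le_one_le)
  then have "\<bar>Q\<bar> \<le> \<bar>P\<bar> + \<bar>M\<bar>"
    using cone by linarith
  then have upper: "\<bar>c * P - s * Q + u\<bar> \<le> 2 * \<bar>P\<bar> + \<bar>M\<bar> + \<bar>u\<bar>"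
    using cP sQ by arith
  have lower: "4 * (e * \<bar>P\<bar>) - \<bar>Q\<bar> - \<bar>v\<bar> \<le> \<bar>s * P + c * Q + v\<bar>"
    using cQ sP by arith
  have "e * \<bar>c * P - s * Q + u\<bar> \<le> e * (2 * \<bar>P\<bar> + \<bar>M\<bar> + \<bar>u\<bar>)"
    using upper e by (intro mult_left_mono) auto
  also have "\<dots> \<le> 2 * (e * \<bar>P\<bar>) + \<bar>M\<bar> + \<bar>u\<bar>"
    using e by (simp add: distrib_left mult_left_le_one_le add_mono)
  finally have "e * \<bar>P\<bar> \<le> 3 * \<bar>M\<bar> + \<bar>u\<bar> + \<bar>v\<bar>"
    using lower rotated cone by linarith
  then show "\<bar>P\<bar> \<le> (3 * \<bar>M\<bar> + \<bar>u\<bar> + \<bar>v\<bar>) / e"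
    using e by (simp add: field_simps)
qed

theorem theorem1:
  fixes x y :: "real poly" and P0 :: "real \<times> real" and \<theta> :: real
  assumes "degree x > 0 \<or> degree y > 0"
    and "0 < \<theta>" and "\<theta> < 2 * pi"
    and "rotation P0 \<theta> ` poly_curve x y = poly_curve x y"
  shows "\<theta> = pi"
proof (rule ccontr)
  assume "\<theta> \<noteq> pi"
  with assms(2,3) have sin: "sin \<theta> \<noteq> 0" by (rule sin_nonzero_in_open_turn)
  obtain a b where deg: "degree (smult a x + smult b y) > 0"
    "degree (smult a y - smult b x) < degree (smult a x + smult b y)"
    using leading_direction[OF assms(1)] by blast
  have frame: "poly (smult a x + smult b y) t = along a b (poly x t, poly y t)"
    "poly (smult a y - smult b x) t = across a b (poly x t, poly y t)" for t
    by (simp_all add: along_def across_def)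
  define e where "e = \<bar>sin \<theta>\<bar> / 4"
  have "e > 0" using sin by (simp add: e_def)
  then obtain M where "\<forall>t. \<bar>poly (smult a y - smult b x) t\<bar>
                           \<le> e * \<bar>poly (smult a x + smult b y) t\<bar> + M"
    using poly_dominated_by_higher_degree[OF deg(2)] by blast
  then have cone: "\<And>P. P \<in> poly_curve x y \<Longrightarrow> \<bar>across a b P\<bar> \<le> e * \<bar>along a b P\<bar> + M"
    unfolding poly_curve_def frame by auto
  obtain c1 c2 where rot: "\<And>P.
     along a b (rotation P0 \<theta> P) = cos \<theta> * along a b P - sin \<theta> * across a b P + c1 \<and>
     across a b (rotation P0 \<theta> P) = sin \<theta> * along a b P + cos \<theta> * across a b P + c2"
    using rotation_frame_coordinates by blast
  obtain B where bounded: "\<And>P Q. \<bar>Q\<bar> \<le> e * \<bar>P\<bar> + M \<Longrightarrow>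
      \<bar>sin \<theta> * P + cos \<theta> * Q + c2\<bar> \<le> e * \<bar>cos \<theta> * P - sin \<theta> * Q + c1\<bar> + M \<Longrightarrow>
      \<bar>P\<bar> \<le> B"
    using cone_meets_rotated_cone_bounded[where c = "cos \<theta>" and s = "sin \<theta>"
        and u = c1 and v = c2 and M = M] sin
    unfolding e_def by auto
  obtain t where far: "B < \<bar>along a b (poly x t, poly y t)\<bar>"
    using poly_unbounded[OF deg(1)] unfolding frame by blast
  define P where "P = (poly x t, poly y t)"
  have on_curve: "P \<in> poly_curve x y" "rotation P0 \<theta> P \<in> poly_curve x y"
    using assms(4) by (auto simp: P_def poly_curve_def)
  have "\<bar>along a b P\<bar> \<le> B"
    using bounded[OF cone[OF on_curve(1)]] cone[OF on_curve(2)] rot[of P] by simp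
  with far show False by (simp add: P_def)
qed

end
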